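(* Let $A\in\mathbb{C}^{m\times n}$. Then there exists $X\in A\{1,3^{\mathfrak{m}}\}$ if and only if there exists $Y\in A\{1,2,3^{\mathfrak{m}}\}$.
   Context: For a positive integer $k$, the Minkowski metric matrix of order $k$ is $G_k=\begin{pmatrix}1&0\\0&-I_{k-1}\end{pmatrix}$ (with $G_1=(1)$). For $A\in\mathbb{C}^{m\times n}$, the Minkowski adjoint is $A^{\sim}=G_nA^*G_m$, where $A^*$ is the conjugate transpose. For $A\in\mathbb{C}^{m\times n}$ and $X\in\mathbb{C}^{n\times m}$ consider the equations $(1)\ AXA=A$, $(2)\ XAX=X$, $(3^{\mathfrak{m}})\ (AX)^{\sim}=AX$, $(4^{\mathfrak{m}})\ (XA)^{\sim}=XA$. For a selection $i,j,\dots,k$ of these equations, $A\{i,j,\dots,k\}$ denotes the set of all $X\in\mathbb{C}^{n\times m}$ satisfying equations $(i),(j),\dots,(k)$. *)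

theory Defs
  imports "Jordan_Normal_Form.Matrix" "HOL.Complex"
begin

definition minkowski_G :: "nat \<Rightarrow> complex mat" where
  "minkowski_G k = mat k k (\<lambda>(i, j). if i = j then (if i = 0 then 1 else -1) else 0)"

definition conj_transpose :: "complex mat \<Rightarrow> complex mat" where
  "conj_transpose A = mat (dim_col A) (dim_row A) (\<lambda>(i, j). cnj (A $$ (j, i)))"

definition minkowski_adj :: "complex mat \<Rightarrow> complex mat" where
  "minkowski_adj A = minkowski_G (dim_col A) * conj_transpose A * minkowski_G (dim_row A)"

definition mink_inv_13 :: "complex mat \<Rightarrow> complex mat set" where
  "mink_inv_13 A = {X. X \<in> carrier_mat (dim_col A) (dim_row A) \<and>
      A * X * A = A \<and> minkowski_adj (A * X) = A * X}"

definition mink_inv_123 :: "complex mat \<Rightarrow> complex mat set" where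
  "mink_inv_123 A = {X. X \<in> carrier_mat (dim_col A) (dim_row A) \<and>
      A * X * A = A \<and> X * A * X = X \<and> minkowski_adj (A * X) = A * X}"

end

theory Submission
  imports Defs
begin

text \<open>If X is a {1}-inverse of A, then X A X is a {1,2}-inverse with A (X A X) = A X.
  Since A X is unchanged, the Minkowski condition (3^m) carries over from X to X A X.\<close>

lemma inner_inverse_sandwich_right:
  fixes A X :: "'a::semiring_0 mat"
  assumes A: "A \<in> carrier_mat m n" and X: "X \<in> carrier_mat n m" and AXA: "A * X * A = A"
  shows "A * (X * A * X) = A * X"
proof -
  have XA: "X * A \<in> carrier_mat n n" using A X by simp
  have "A * (X * A * X) = A * (X * A) * X" using assoc_mult_mat[OF A XA X] by simp
  also have "\<dots> = A * X * A * X" using assoc_mult_mat[OF A X A] by simp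
  finally show ?thesis by (simp only: AXA)
qed

lemma inner_inverse_sandwich_reflexive:
  fixes A X :: "'a::semiring_0 mat"
  assumes A: "A \<in> carrier_mat m n" and X: "X \<in> carrier_mat n m" and AXA: "A * X * A = A"
  shows "X * A * X * A * (X * A * X) = X * A * X"
proof -
  have XAX: "X * A * X \<in> carrier_mat n m" using A X by simp
  have AX: "A * X \<in> carrier_mat m m" using A X by simp
  have "X * A * X * A * (X * A * X) = X * A * X * (A * (X * A * X))"
    using assoc_mult_mat[OF XAX A XAX] .
  also have "\<dots> = X * A * X * (A * X)" by (simp only: inner_inverse_sandwich_right[OF assms])
  also have "\<dots> = X * (A * X) * (A * X)" using assoc_mult_mat[OF X A X] by simp
  also have "\<dots> = X * (A * X * A * X)"
    using assoc_mult_mat[OF X AX AX] assoc_mult_mat[OF AX A X] by simp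
  finally show ?thesis by (simp only: AXA assoc_mult_mat[OF X A X])
qed

lemma mink_inv_123_subset_13: "mink_inv_123 A \<subseteq> mink_inv_13 A"
  unfolding mink_inv_123_def mink_inv_13_def by blast

lemma mink_inv_13_sandwich_in_123:
  assumes "X \<in> mink_inv_13 A"
  shows "X * A * X \<in> mink_inv_123 A"
proof -
  have A: "A \<in> carrier_mat (dim_row A) (dim_col A)" by simp
  have X: "X \<in> carrier_mat (dim_col A) (dim_row A)" "A * X * A = A"
      and adj: "minkowski_adj (A * X) = A * X"
    using assms unfolding mink_inv_13_def by auto
  have "X * A * X \<in> carrier_mat (dim_col A) (dim_row A)"
    using A X(1) by (intro mult_carrier_mat)
  then show ?thesis
    unfolding mink_inv_123_def
    using X(2) adj inner_inverse_sandwich_right[OF A X] inner_inverse_sandwich_reflexive[OF A X]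
    by simp
qed

theorem theorem4p2:
  fixes A :: "complex mat" and m n :: nat
  assumes "m > 0" and "n > 0" and "A \<in> carrier_mat m n"
  shows "(\<exists>X. X \<in> mink_inv_13 A) \<longleftrightarrow> (\<exists>Y. Y \<in> mink_inv_123 A)"
  using mink_inv_13_sandwich_in_123 mink_inv_123_subset_13 by blast

end
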